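(* Let $X$ be a GOGAm triangle of size $n$. (i) For $1\leq k\leq n$, the triangle obtained from $X$ by replacing every entry $X_{i,j}$ with $n\geq i\geq j+k$ by $1$ is a GOGAm triangle. (ii) Let $n\geq m\geq k\geq 1$. Suppose that for every $i\geq m+1$ the partial SW–NE diagonal $(X_{i+l,k+l})_{0\leq l\leq n-i}$ is constant. Then the triangle obtained from $X$ by replacing the entries $X_{m+l,k+l}$, $1\leq l\leq n-m$, by $X_{m,k}$ is a GOGAm triangle.
   Context: A Gelfand–Tsetlin triangle of size $n$ is an array $X=(X_{i,j})_{n\geq i\geq j\geq 1}$ of positive integers (row $n$ is the top row, row $1$ the bottom) with $X_{i+1,j}\leq X_{i,j}\leq X_{i+1,j+1}$ for all $n-1\geq i\geq j\geq 1$. A Magog triangle of size $n$ is a Gelfand–Tsetlin triangle with $X_{j,j}\leq j$ for all $j$. For $1\leq k\leq n-1$, $s_k$ changes only row $k$, replacing $X_{k,j}$ by $\max(X_{k+1,j},X_{k-1,j-1})+\min(X_{k+1,j+1},X_{k-1,j})-X_{k,j}$ (terms outside the triangle omitted); $\omega_j=s_j\circ\cdots\circ s_1$, $S=\omega_1\circ\cdots\circ\omega_{n-1}$. A GOGAm triangle of size $n$ is a Gelfand–Tsetlin triangle $X$ with $S(X)$ a Magog triangle. (Equivalently, by a known result, $X_{n,n}\leq n$ and for all $1\leq k\leq n-1$ and all $n=j_0>\dots>j_{n-k}\geq 1$: $\sum_{i=0}^{n-k-1}(X_{j_i+i,j_i}-X_{j_{i+1}+i,j_{i+1}})+X_{j_{n-k}+n-k,j_{n-k}}\leq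 k$.) *)

theory Defs
  imports Main
begin

text \<open>A triangle of size n is a function X :: nat => nat => int, where only the entries
  X i j with n >= i >= j >= 1 are meaningful (row n is the top row).\<close>

definition in_tri :: "nat \<Rightarrow> nat \<Rightarrow> nat \<Rightarrow> bool" where
  "in_tri n i j \<longleftrightarrow> 1 \<le> j \<and> j \<le> i \<and> i \<le> n"

definition GT_triangle :: "nat \<Rightarrow> (nat \<Rightarrow> nat \<Rightarrow> int) \<Rightarrow> bool" where
  "GT_triangle n X \<longleftrightarrow>
     (\<forall>i j. in_tri n i j \<longrightarrow> X i j \<ge> 1) \<and>
     (\<forall>i j. 1 \<le> j \<and> j \<le> i \<and> i + 1 \<le> n \<longrightarrow>
        X (i+1) j \<le> X i j \<and> X i j \<le> X (i+1) (j+1))"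

definition Magog_triangle :: "nat \<Rightarrow> (nat \<Rightarrow> nat \<Rightarrow> int) \<Rightarrow> bool" where
  "Magog_triangle n X \<longleftrightarrow> GT_triangle n X \<and> (\<forall>j. 1 \<le> j \<and> j \<le> n \<longrightarrow> X j j \<le> int j)"

text \<open>The local toggle s_k (for 1 <= k <= n-1): changes only row k; terms outside the
  triangle are omitted from max/min. X (k-1) (j-1) exists iff j >= 2, X (k-1) j exists iff j <= k-1.\<close>

definition s_op :: "nat \<Rightarrow> (nat \<Rightarrow> nat \<Rightarrow> int) \<Rightarrow> (nat \<Rightarrow> nat \<Rightarrow> int)" where
  "s_op k X = (\<lambda>i j.
     if i = k \<and> 1 \<le> j \<and> j \<le> k then
       (if 2 \<le> j then max (X (k+1) j) (X (k-1) (j-1)) else X (k+1) j)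
       + (if j + 1 \<le> k then min (X (k+1) (j+1)) (X (k-1) j) else X (k+1) (j+1))
       - X k j
     else X i j)"

fun omega_op :: "nat \<Rightarrow> (nat \<Rightarrow> nat \<Rightarrow> int) \<Rightarrow> (nat \<Rightarrow> nat \<Rightarrow> int)" where
  "omega_op 0 = id"
| "omega_op (Suc j) = s_op (Suc j) \<circ> omega_op j"

fun S_aux :: "nat \<Rightarrow> (nat \<Rightarrow> nat \<Rightarrow> int) \<Rightarrow> (nat \<Rightarrow> nat \<Rightarrow> int)" where
  "S_aux 0 = id"
| "S_aux (Suc m) = S_aux m \<circ> omega_op (Suc m)"

definition S_op :: "nat \<Rightarrow> (nat \<Rightarrow> nat \<Rightarrow> int) \<Rightarrow> (nat \<Rightarrow> nat \<Rightarrow> int)" where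
  "S_op n = S_aux (n - 1)"

definition GOGAm_triangle :: "nat \<Rightarrow> (nat \<Rightarrow> nat \<Rightarrow> int) \<Rightarrow> bool" where
  "GOGAm_triangle n X \<longleftrightarrow> GT_triangle n X \<and> Magog_triangle n (S_op n X)"

end

theory Submission
  imports Defs
begin

text \<open>Write w i a = X(a+i, a) - X(a+i-1, a). Unwinding the toggles shows that the diagonal entry
  (S X)(k, k) equals X(n, n) plus the maximum of the sums w 1 a_0 + ... + w (n-k) a_(n-k-1) over
  strictly decreasing chains n - 1 >= a_0 > a_1 > ... with a_i + i >= n - k. Such a sum telescopes
  into differences X(c+i, c) - X(c'+i, c') with c' < c of entries on a common SW-NE diagonal, plus
  one final entry. Both operations of the theorem yield a Gelfand-Tsetlin triangle obtained from X
  by capping some of these diagonals at a constant. Capping can only decrease the differences and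
  the final entry, so every chain sum of the new triangle is bounded by the corresponding one of X,
  and the Magog condition on S X is inherited.\<close>

section \<open>Maxima over chains\<close>

definition range_max :: "(nat \<Rightarrow> int) \<Rightarrow> nat \<Rightarrow> nat \<Rightarrow> int" where
  "range_max f lo t = Max (f ` {lo..t})"

lemma range_max_same [simp]: "range_max f lo lo = f lo"
  by (simp add: range_max_def)

lemma range_max_Suc: "lo \<le> t \<Longrightarrow> range_max f lo (Suc t) = max (range_max f lo t) (f (Suc t))"
  unfolding range_max_def by (simp add: atLeastAtMostSuc_conv max.commute)

lemma range_max_ge: "lo \<le> a \<Longrightarrow> a \<le> t \<Longrightarrow> f a \<le> range_max f lo t"
  unfolding range_max_def by (rule Max_ge) auto

lemma range_max_attained: "lo \<le> t \<Longrightarrow> \<exists>a. lo \<le> a \<and> a \<le> t \<and> range_max f lo t = f a"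
proof -
  assume "lo \<le> t"
  then have "Max (f ` {lo..t}) \<in> f ` {lo..t}" by (intro Max_in) auto
  then show ?thesis unfolding range_max_def by auto
qed

lemma range_max_cong:
  "(\<And>a. lo \<le> a \<Longrightarrow> a \<le> t \<Longrightarrow> f a = g a) \<Longrightarrow> range_max f lo t = range_max g lo t"
  unfolding range_max_def by (metis atLeastAtMost_iff image_cong)

lemma range_max_shift: "range_max f (Suc lo) (Suc t) = range_max (\<lambda>b. f (Suc b)) lo t"
  unfolding range_max_def by (metis image_Suc_atLeastAtMost image_image)

text \<open>path_max w d j is the maximum of w 1 a_1 + ... + w d a_d over 1 <= a_1 <= ... <= a_d <= j;
  chain_max w m r c is the maximum of w (m+1) (a 0) + ... + w (m+r) (a (r-1)) over the chains
  a with decr_chain r c a (see chain_max_attained).\<close>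

fun path_max :: "(nat \<Rightarrow> nat \<Rightarrow> int) \<Rightarrow> nat \<Rightarrow> nat \<Rightarrow> int" where
  "path_max w 0 j = 0"
| "path_max w (Suc d) j = range_max (\<lambda>a. w (Suc d) a + path_max w d a) 1 j"

fun chain_max :: "(nat \<Rightarrow> nat \<Rightarrow> int) \<Rightarrow> nat \<Rightarrow> nat \<Rightarrow> nat \<Rightarrow> int" where
  "chain_max w m 0 c = 0"
| "chain_max w m (Suc r) c = range_max (\<lambda>a. w (Suc m) a + chain_max w (Suc m) r (a - 1)) (Suc r) c"

lemma path_max_Suc_Suc:
  "1 \<le> j \<Longrightarrow> path_max w (Suc d) (Suc j) = max (path_max w (Suc d) j) (w (Suc d) (Suc j) + path_max w d (Suc j))"
  by (simp add: range_max_Suc)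

definition omega_weight :: "(nat \<Rightarrow> nat \<Rightarrow> int) \<Rightarrow> nat \<Rightarrow> nat \<Rightarrow> int" where
  "omega_weight w i b = w i (b+1) + path_max w (i+1) b - path_max w i (b+1) - path_max w i b + path_max w (i-1) (b+1)"

lemma max_plus_step:
  fixes mT1 mT2 e W R P1 P2 q1 q2 Q2 W' R' :: int
  assumes "mT1 + W = R" "max R P1 = mT1 + q1" "W' = max W (e - mT2 - mT1 + P1)"
    "R' = max R (e + q1)" "P2 = max P1 (mT2 + Q2)" "q2 = max q1 Q2" "mT2 = max mT1 e"
  shows "mT2 + W' = R' \<and> max R' P2 = mT2 + q2"
  using assms unfolding max_def by (auto split: if_splits)

text \<open>The second conjunct is only needed to carry the induction.\<close>

lemma range_max_telescoping:
  fixes e m Q :: "nat \<Rightarrow> int"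
  assumes mrec: "\<And>c. lo \<le> c \<Longrightarrow> m (Suc c) = max (m c) (e (Suc c))"
    and "lo \<le> t"
  shows "m (Suc t) + range_max (\<lambda>b. e (Suc b) - m (Suc b) - m b + range_max (\<lambda>a. m a + Q a) lo b) lo t
       = range_max (\<lambda>b. e (Suc b) + range_max Q lo b) lo t
    \<and> max (range_max (\<lambda>b. e (Suc b) + range_max Q lo b) lo t) (range_max (\<lambda>a. m a + Q a) lo (Suc t))
       = m (Suc t) + range_max Q lo (Suc t)"
  using \<open>lo \<le> t\<close>
proof (induction t rule: dec_induct)
  case base
  show ?case using mrec[of lo] by (simp add: range_max_Suc max_def)
next
  case (step t)
  from step.hyps have "lo \<le> Suc t" by simp
  with step.hyps show ?case
    using max_plus_step[OF step.IH[THEN conjunct1] step.IH[THEN conjunct2]]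
    by (simp add: range_max_Suc mrec)
qed

lemma chain_max_omega_weight:
  "Suc s \<le> t \<Longrightarrow> path_max w (Suc k) t + chain_max (omega_weight w) k s (t - 1)
     = range_max (\<lambda>a. w (Suc k) a + path_max w k a + chain_max w (Suc k) s (a - 1)) (Suc s) t"
proof (induction s arbitrary: k t)
  case 0
  show ?case by simp
next
  case (Suc s)
  then obtain T where tT: "t = Suc T" and hT: "Suc s \<le> T" by (cases t) auto
  define e where "e c = w (Suc k) c + path_max w k c" for c
  define m where "m c = path_max w (Suc k) c" for c
  define Q where "Q a = w (Suc (Suc k)) a + chain_max w (Suc (Suc k)) s (a - 1)" for a
  have mrec: "m (Suc c) = max (m c) (e (Suc c))" if "Suc s \<le> c" for c
    unfolding m_def e_def using that by (intro path_max_Suc_Suc) simp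
  have "chain_max (omega_weight w) k (Suc s) (t - 1)
      = range_max (\<lambda>b. e (Suc b) - m (Suc b) - m b + range_max (\<lambda>a. m a + Q a) (Suc s) b) (Suc s) T"
    unfolding tT chain_max.simps diff_Suc_1
  proof (rule range_max_cong)
    fix b assume b: "Suc s \<le> b" "b \<le> T"
    have "range_max (\<lambda>a. w (Suc (Suc k)) a + path_max w (Suc k) a + chain_max w (Suc (Suc k)) s (a - 1)) (Suc s) b
        = range_max (\<lambda>a. m a + Q a) (Suc s) b"
      unfolding m_def Q_def by (rule range_max_cong) simp
    with Suc.IH[of b "Suc k"] b show "omega_weight w (Suc k) b + chain_max (omega_weight w) (Suc k) s (b - 1) =
        e (Suc b) - m (Suc b) - m b + range_max (\<lambda>a. m a + Q a) (Suc s) b"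
      unfolding omega_weight_def e_def m_def by simp
  qed
  moreover have "range_max (\<lambda>a. w (Suc k) a + path_max w k a + chain_max w (Suc k) (Suc s) (a - 1)) (Suc (Suc s)) t
      = range_max (\<lambda>b. e (Suc b) + range_max Q (Suc s) b) (Suc s) T"
    unfolding tT range_max_shift e_def Q_def by simp
  moreover have "m t + range_max (\<lambda>b. e (Suc b) - m (Suc b) - m b + range_max (\<lambda>a. m a + Q a) (Suc s) b) (Suc s) T
      = range_max (\<lambda>b. e (Suc b) + range_max Q (Suc s) b) (Suc s) T"
    using range_max_telescoping[of "Suc s" m e T Q] mrec hT tT by auto
  ultimately show ?case unfolding m_def by simp
qed

declare path_max.simps(2) [simp del]

definition decr_chain :: "nat \<Rightarrow> nat \<Rightarrow> (nat \<Rightarrow> nat) \<Rightarrow> bool" where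
  "decr_chain r c a \<longleftrightarrow> (\<forall>i<r. r \<le> a i + i \<and> a i + i \<le> c) \<and> (\<forall>i. Suc i < r \<longrightarrow> a (Suc i) < a i)"

lemma decr_chain_gap: "decr_chain r c a \<Longrightarrow> i < r \<Longrightarrow> a i + i \<le> a 0"
proof (induction i)
  case 0
  then show ?case by simp
next
  case (Suc i)
  then have "a (Suc i) < a i" unfolding decr_chain_def by blast
  with Suc show ?case by simp
qed

lemma decr_chain_tail: "decr_chain (Suc r) c a \<Longrightarrow> decr_chain r (a 0 - 1) (\<lambda>i. a (Suc i))"
  using decr_chain_gap[of "Suc r" c a "Suc _"] unfolding decr_chain_def by fastforce

lemma decr_chain_Cons:
  "Suc r \<le> a0 \<Longrightarrow> a0 \<le> c \<Longrightarrow> decr_chain r (a0 - 1) a \<Longrightarrow> decr_chain (Suc r) c (case_nat a0 a)"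
  unfolding decr_chain_def by (auto split: nat.split simp: less_Suc_eq_0_disj)

lemma chain_sum_le_chain_max: "decr_chain r c a \<Longrightarrow> (\<Sum>i<r. w (m + Suc i) (a i)) \<le> chain_max w m r c"
proof (induction r arbitrary: m c a)
  case 0
  then show ?case by simp
next
  case (Suc r)
  have a0: "Suc r \<le> a 0" "a 0 \<le> c" using Suc.prems unfolding decr_chain_def by auto
  have "(\<Sum>i<Suc r. w (m + Suc i) (a i)) = w (Suc m) (a 0) + (\<Sum>i<r. w (Suc m + Suc i) (a (Suc i)))"
    by (simp only: sum.lessThan_Suc_shift) simp
  also have "\<dots> \<le> w (Suc m) (a 0) + chain_max w (Suc m) r (a 0 - 1)"
    using Suc.IH[OF decr_chain_tail[OF Suc.prems], of "Suc m"] by simp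
  also have "\<dots> \<le> chain_max w m (Suc r) c"
    using range_max_ge[of "Suc r" "a 0" c "\<lambda>a. w (Suc m) a + chain_max w (Suc m) r (a - 1)"] a0 by simp
  finally show ?case .
qed

lemma chain_max_attained: "r \<le> c \<Longrightarrow> \<exists>a. decr_chain r c a \<and> (\<Sum>i<r. w (m + Suc i) (a i)) = chain_max w m r c"
proof (induction r arbitrary: m c)
  case 0
  then show ?case by (simp add: decr_chain_def)
next
  case (Suc r)
  obtain a0 where a0: "Suc r \<le> a0" "a0 \<le> c"
    and max: "chain_max w m (Suc r) c = w (Suc m) a0 + chain_max w (Suc m) r (a0 - 1)"
    using range_max_attained[of "Suc r" c "\<lambda>a. w (Suc m) a + chain_max w (Suc m) r (a - 1)"] Suc.prems by auto
  obtain a where "decr_chain r (a0 - 1) a"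
    and sum: "(\<Sum>i<r. w (Suc m + Suc i) (a i)) = chain_max w (Suc m) r (a0 - 1)"
    using Suc.IH[of "a0 - 1" "Suc m"] a0 by (metis Suc_le_D diff_Suc_1 Suc_le_mono)
  then have "decr_chain (Suc r) c (case_nat a0 a)" using decr_chain_Cons a0 by blast
  moreover have "(\<Sum>i<Suc r. w (m + Suc i) (case_nat a0 a i)) = chain_max w m (Suc r) c"
    using sum max by (simp only: sum.lessThan_Suc_shift) simp
  ultimately show ?case by blast
qed

section \<open>The diagonal of S as a chain maximum\<close>

definition diag_diff :: "(nat \<Rightarrow> nat \<Rightarrow> int) \<Rightarrow> nat \<Rightarrow> nat \<Rightarrow> int" where
  "diag_diff X i a = X (a + i) a - X (a + i - 1) a"

definition omega_entry :: "(nat \<Rightarrow> nat \<Rightarrow> int) \<Rightarrow> nat \<Rightarrow> nat \<Rightarrow> int" where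
  "omega_entry X i j = X (i+1) (j+1) + path_max (diag_diff X) (i - j + 1) j - path_max (diag_diff X) (i - j) (j+1)"

lemma toggle_omega_entry:
  assumes j: "1 \<le> j" "j \<le> Suc m"
  shows "(if 2 \<le> j then max (X (m+2) j) (omega_entry X m (j-1)) else X (m+2) j)
       + (if j + 1 \<le> Suc m then min (X (m+2) (j+1)) (omega_entry X m j) else X (m+2) (j+1))
       - X (m+1) j = omega_entry X (Suc m) j"
proof -
  let ?P = "path_max (diag_diff X)"
  have "(j = 1 \<and> m = 0) \<or> (\<exists>D. j = 1 \<and> m = Suc D) \<or> (2 \<le> j \<and> j = Suc m) \<or> (\<exists>D. 2 \<le> j \<and> m = j + D)"
    using j by (cases m) (auto simp: le_iff_add[symmetric])
  then consider "j = 1" "m = 0" | D where "j = 1" "m = Suc D"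
    | "2 \<le> j" "j = Suc m" | D where "2 \<le> j" "m = j + D"
    by blast
  then show ?thesis
  proof cases
    case 1
    then show ?thesis by (simp add: omega_entry_def path_max.simps diag_diff_def)
  next
    case (2 D)
    have "?P (Suc (Suc D)) 1 = diag_diff X (Suc (Suc D)) 1 + ?P (Suc D) 1"
      by (simp add: path_max.simps)
    moreover have "?P (Suc D) 2 = max (?P (Suc D) 1) (diag_diff X (Suc D) 2 + ?P D 2)"
      using path_max_Suc_Suc[of 1 "diag_diff X" D] by (simp add: numeral_2_eq_2)
    ultimately show ?thesis using 2
      by (simp add: omega_entry_def diag_diff_def numeral_2_eq_2 min_def max_def)
  next
    case 3
    have "?P 1 (Suc m) = max (?P 1 m) (diag_diff X 1 (Suc m))"
      using path_max_Suc_Suc[of m "diag_diff X" 0] 3 by simp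
    then show ?thesis using 3 by (simp add: omega_entry_def diag_diff_def max_def)
  next
    case (4 D)
    then obtain j' where j': "j = Suc j'" "1 \<le> j'" by (cases j) auto
    have "?P (Suc (Suc D)) j = max (?P (Suc (Suc D)) j') (diag_diff X (Suc (Suc D)) j + ?P (Suc D) j)"
      using path_max_Suc_Suc[of j' "diag_diff X" "Suc D"] j' by simp
    moreover have "?P (Suc D) (j+1) = max (?P (Suc D) j) (diag_diff X (Suc D) (j+1) + ?P D (j+1))"
      using path_max_Suc_Suc[of j "diag_diff X" D] j by simp
    moreover have "m - j' = Suc D" "m - j = D" "Suc m - j = Suc D" using 4 j' by auto
    ultimately show ?thesis using 4 j'
      by (simp add: omega_entry_def diag_diff_def min_def max_def)
  qed
qed

lemma omega_op_eq:
  "omega_op m X i j = (if 1 \<le> j \<and> j \<le> i \<and> i \<le> m then omega_entry X i j else X i j)"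
proof (induction m arbitrary: i j)
  case 0
  show ?case by simp
next
  case (Suc m)
  show ?case
  proof (cases "i = Suc m \<and> 1 \<le> j \<and> j \<le> Suc m")
    case True
    have row_m: "omega_op m X m j' = omega_entry X m j'" if "1 \<le> j'" "j' \<le> m" for j'
      using Suc.IH that by simp
    have "omega_op (Suc m) X i j =
       (if 2 \<le> j then max (X (m+2) j) (omega_op m X m (j-1)) else X (m+2) j)
       + (if j + 1 \<le> Suc m then min (X (m+2) (j+1)) (omega_op m X m j) else X (m+2) (j+1))
       - X (m+1) j"
      using True Suc.IH by (simp add: s_op_def)
    also have "\<dots> = omega_entry X (Suc m) j"
      using toggle_omega_entry[of j m X] True row_m[of "j-1"] row_m[of j] by auto
    finally show ?thesis using True by simp
  next
    case False
    then show ?thesis using Suc.IH[of i j] by (auto simp: s_op_def)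
  qed
qed

declare omega_op.simps(2) [simp del]

lemma S_aux_above: "m < i \<Longrightarrow> S_aux m X i j = X i j"
  by (induction m arbitrary: X) (simp_all add: omega_op_eq)

lemma chain_max_cong:
  "(\<And>i a. 1 \<le> i \<Longrightarrow> i \<le> r \<Longrightarrow> 1 \<le> a \<Longrightarrow> a + i \<le> c + 1 \<Longrightarrow> w (m+i) a = w' (m+i) a)
   \<Longrightarrow> chain_max w m r c = chain_max w' m r c"
proof (induction r arbitrary: m c)
  case 0
  show ?case by simp
next
  case (Suc r)
  show ?case unfolding chain_max.simps
  proof (rule range_max_cong)
    fix a assume a: "Suc r \<le> a" "a \<le> c"
    have "chain_max w (Suc m) r (a - 1) = chain_max w' (Suc m) r (a - 1)"
    proof (rule Suc.IH)
      fix i b assume "1 \<le> i" "i \<le> r" "1 \<le> b" "b + i \<le> a - 1 + 1"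
      then show "w (Suc m + i) b = w' (Suc m + i) b" using Suc.prems[of "Suc i" b] a by simp
    qed
    then show "w (Suc m) a + chain_max w (Suc m) r (a - 1) = w' (Suc m) a + chain_max w' (Suc m) r (a - 1)"
      using Suc.prems[of 1 a] a by simp
  qed
qed

lemma diag_diff_omega_op:
  "1 \<le> i \<Longrightarrow> 1 \<le> b \<Longrightarrow> b + i \<le> m \<Longrightarrow> diag_diff (omega_op m X) i b = omega_weight (diag_diff X) i b"
  by (cases i) (simp_all add: diag_diff_def omega_weight_def omega_op_eq omega_entry_def)

lemma S_aux_diagonal:
  "1 \<le> k \<Longrightarrow> k \<le> n \<Longrightarrow> S_aux (n - 1) X k k = X n n + chain_max (diag_diff X) 0 (n - k) (n - 1)"
proof (induction n arbitrary: X k)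
  case 0
  then show ?case by simp
next
  case (Suc n)
  show ?case
  proof (cases "k = Suc n")
    case True
    then show ?thesis by (simp add: S_aux_above)
  next
    case False
    with Suc.prems have k: "1 \<le> k" "k \<le> n" by auto
    then obtain n' where n: "n = Suc n'" by (cases n) auto
    define T where "T = omega_op n X"
    have "S_aux (Suc n - 1) X k k = S_aux (n - 1) T k k" using n by (simp add: T_def)
    also have "\<dots> = T n n + chain_max (diag_diff T) 0 (n - k) (n - 1)" using Suc.IH k by blast
    also have "T n n = X (Suc n) (Suc n) + path_max (diag_diff X) 1 n"
      using n by (simp add: T_def omega_op_eq omega_entry_def)
    also have "chain_max (diag_diff T) 0 (n - k) (n - 1) = chain_max (omega_weight (diag_diff X)) 0 (n - k) (n - 1)"
      by (rule chain_max_cong) (use n in \<open>simp add: T_def diag_diff_omega_op\<close>)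
    also have "X (Suc n) (Suc n) + path_max (diag_diff X) 1 n + chain_max (omega_weight (diag_diff X)) 0 (n - k) (n - 1)
        = X (Suc n) (Suc n) + chain_max (diag_diff X) 0 (Suc (n - k)) n"
      using chain_max_omega_weight[of "n - k" n "diag_diff X" 0] k by (simp add: path_max.simps)
    finally show ?thesis using k by (simp add: Suc_diff_le)
  qed
qed

section \<open>The toggles preserve Gelfand-Tsetlin triangles\<close>

lemma GT_triangle_pos: "GT_triangle n Z \<Longrightarrow> in_tri n i j \<Longrightarrow> 1 \<le> Z i j"
  unfolding GT_triangle_def by blast

lemma GT_triangle_interlace: "GT_triangle n Z \<Longrightarrow> 1 \<le> j \<Longrightarrow> j \<le> i \<Longrightarrow> i + 1 \<le> n \<Longrightarrow>
   Z (i+1) j \<le> Z i j \<and> Z i j \<le> Z (i+1) (j+1)"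
  unfolding GT_triangle_def by blast

text \<open>s_op k reflects X k j inside the interval bounded by its four neighbours, so the new
  entry stays in that interval.\<close>

lemma s_op_interlace:
  assumes G: "GT_triangle n Z" and k: "1 \<le> k" "k + 1 \<le> n" and j: "1 \<le> j" "j \<le> k"
  shows "Z (k+1) j \<le> s_op k Z k j \<and> s_op k Z k j \<le> Z (k+1) (j+1)
    \<and> (2 \<le> j \<longrightarrow> Z (k-1) (j-1) \<le> s_op k Z k j)
    \<and> (j + 1 \<le> k \<longrightarrow> s_op k Z k j \<le> Z (k-1) j)"
proof -
  have "Z (k+1) j \<le> Z k j \<and> Z k j \<le> Z (k+1) (j+1)"
    using GT_triangle_interlace[OF G j k(2)] .
  moreover have "Z (k-1) (j-1) \<le> Z k j" if "2 \<le> j"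
    using GT_triangle_interlace[OF G, of "j-1" "k-1"] that j k by simp
  moreover have "Z k j \<le> Z (k-1) j" if "j + 1 \<le> k"
    using GT_triangle_interlace[OF G, of j "k-1"] that j k by simp
  ultimately show ?thesis
    using j by (auto simp: s_op_def max_def min_def)
qed

lemma s_op_GT:
  assumes G: "GT_triangle n Z" and k: "1 \<le> k" "k + 1 \<le> n"
  shows "GT_triangle n (s_op k Z)"
  unfolding GT_triangle_def
proof (rule conjI; intro allI impI)
  fix i j assume t: "in_tri n i j"
  show "1 \<le> s_op k Z i j"
  proof (cases "i = k")
    case True
    then have "1 \<le> Z (k+1) j" using GT_triangle_pos[OF G] t k by (simp add: in_tri_def)
    then show ?thesis using s_op_interlace[OF G k, of j] t True by (simp add: in_tri_def)
  next
    case False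
    then show ?thesis using GT_triangle_pos[OF G t] by (simp add: s_op_def)
  qed
next
  fix i j assume h: "1 \<le> j \<and> j \<le> i \<and> i + 1 \<le> n"
  consider "i = k" | "i + 1 = k" | "i \<noteq> k" "i + 1 \<noteq> k" by blast
  then show "s_op k Z (i+1) j \<le> s_op k Z i j \<and> s_op k Z i j \<le> s_op k Z (i+1) (j+1)"
  proof cases
    case 1
    then show ?thesis using s_op_interlace[OF G k, of j] h by (simp add: s_op_def)
  next
    case 2
    then show ?thesis
      using s_op_interlace[OF G k, of j] s_op_interlace[OF G k, of "j+1"] h by (auto simp: s_op_def)
  next
    case 3
    then show ?thesis using GT_triangle_interlace[OF G, of j i] h by (simp add: s_op_def)
  qed
qed

lemma omega_op_GT: "GT_triangle n X \<Longrightarrow> m + 1 \<le> n \<Longrightarrow> GT_triangle n (omega_op m X)"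
  by (induction m) (simp_all add: omega_op.simps(2) s_op_GT)

lemma S_op_GT: "GT_triangle n X \<Longrightarrow> GT_triangle n (S_op n X)"
proof -
  have "GT_triangle n (S_aux m X)" if "GT_triangle n X" "m + 1 \<le> n" for m X
    using that by (induction m arbitrary: X) (simp_all add: omega_op_GT)
  then show "GT_triangle n X \<Longrightarrow> GT_triangle n (S_op n X)"
    by (cases n) (simp_all add: S_op_def)
qed

section \<open>Comparing chain sums\<close>

lemma GT_triangle_diag_mono:
  assumes G: "GT_triangle n X"
  shows "1 \<le> c' \<Longrightarrow> c' \<le> c \<Longrightarrow> c + i \<le> n \<Longrightarrow> X (c'+i) c' \<le> X (c+i) c"
proof (induction c)
  case 0
  then show ?case by simp
next
  case (Suc c)
  show ?case
  proof (cases "c' = Suc c")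
    case False
    with Suc.prems have "c' \<le> c" "1 \<le> c" by auto
    moreover have "X (c+i) c \<le> X (c+i+1) (c+1)"
      using GT_triangle_interlace[OF G, of c "c+i"] Suc.prems \<open>1 \<le> c\<close> by simp
    ultimately show ?thesis using Suc.IH Suc.prems by simp
  qed simp
qed

text \<open>With j_0 = n and j_(i+1) = a i, the right-hand side is the sum occurring in the known
  inequality characterisation of GOGAm triangles.\<close>

lemma diag_telescope:
  "Z n n + (\<Sum>i<r. diag_diff Z (Suc i) (a i))
   = (\<Sum>i<r. Z (case_nat n a i + i) (case_nat n a i) - Z (case_nat n a (Suc i) + i) (case_nat n a (Suc i)))
     + Z (case_nat n a r + r) (case_nat n a r)"
  by (induction r) (simp_all add: diag_diff_def)

lemma decr_chain_from_top:
  assumes "decr_chain r (n - 1) a" "1 \<le> n" "i \<le> r"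
  shows "1 \<le> case_nat n a i \<and> case_nat n a i + i \<le> n \<and> (i < r \<longrightarrow> a i < case_nat n a i)"
proof (cases i)
  case (Suc j)
  with assms have "j < r" "r \<le> a j + j" "a j + j \<le> n - 1" "Suc j < r \<longrightarrow> a (Suc j) < a j"
    unfolding decr_chain_def by auto
  with Suc show ?thesis by auto
qed (use assms in \<open>auto simp: decr_chain_def\<close>)

lemma chain_sum_mono:
  assumes ch: "decr_chain r (n - 1) a" and n: "1 \<le> n"
    and diff: "\<And>i c c'. 1 \<le> c' \<Longrightarrow> c' < c \<Longrightarrow> c + i \<le> n \<Longrightarrow>
        Y (c+i) c - Y (c'+i) c' \<le> X (c+i) c - X (c'+i) c'"
    and last: "\<And>c. 1 \<le> c \<Longrightarrow> c + r \<le> n \<Longrightarrow> Y (c+r) c \<le> X (c+r) c"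
  shows "Y n n + (\<Sum>i<r. diag_diff Y (Suc i) (a i)) \<le> X n n + (\<Sum>i<r. diag_diff X (Suc i) (a i))"
proof -
  let ?A = "case_nat n a"
  have "(\<Sum>i<r. Y (?A i + i) (?A i) - Y (?A (Suc i) + i) (?A (Suc i)))
     \<le> (\<Sum>i<r. X (?A i + i) (?A i) - X (?A (Suc i) + i) (?A (Suc i)))"
  proof (rule sum_mono)
    fix i assume "i \<in> {..<r}"
    then show "Y (?A i + i) (?A i) - Y (?A (Suc i) + i) (?A (Suc i))
        \<le> X (?A i + i) (?A i) - X (?A (Suc i) + i) (?A (Suc i))"
      using decr_chain_from_top[OF ch n, of i] decr_chain_from_top[OF ch n, of "Suc i"] diff by simp
  qed
  moreover have "Y (?A r + r) (?A r) \<le> X (?A r + r) (?A r)"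
    using last decr_chain_from_top[OF ch n, of r] by simp
  ultimately show ?thesis unfolding diag_telescope by linarith
qed

lemma GOGAm_transfer:
  assumes GX: "GOGAm_triangle n X" and GY: "GT_triangle n Y"
    and diff: "\<And>i c c'. 1 \<le> c' \<Longrightarrow> c' < c \<Longrightarrow> c + i \<le> n \<Longrightarrow>
        Y (c+i) c - Y (c'+i) c' \<le> X (c+i) c - X (c'+i) c'"
    and last: "\<And>i c. 1 \<le> c \<Longrightarrow> c + i \<le> n \<Longrightarrow> Y (c+i) c \<le> X (c+i) c"
  shows "GOGAm_triangle n Y"
  unfolding GOGAm_triangle_def Magog_triangle_def
proof (intro conjI allI impI)
  show "GT_triangle n Y" by (rule GY)
  show "GT_triangle n (S_op n Y)" by (rule S_op_GT[OF GY])
  fix k assume k: "1 \<le> k \<and> k \<le> n"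
  then have "n - k \<le> n - 1" by linarith
  then obtain a where ch: "decr_chain (n - k) (n - 1) a"
    and sum: "(\<Sum>i<n - k. diag_diff Y (0 + Suc i) (a i)) = chain_max (diag_diff Y) 0 (n - k) (n - 1)"
    using chain_max_attained[of "n - k" "n - 1" "diag_diff Y" 0] by auto
  have "S_op n Y k k = Y n n + (\<Sum>i<n - k. diag_diff Y (Suc i) (a i))"
    unfolding S_op_def using S_aux_diagonal k sum by simp
  also have "\<dots> \<le> X n n + (\<Sum>i<n - k. diag_diff X (Suc i) (a i))"
    by (rule chain_sum_mono[OF ch]) (use k diff last in \<open>linarith | blast\<close>)+
  also have "\<dots> \<le> X n n + chain_max (diag_diff X) 0 (n - k) (n - 1)"
    using chain_sum_le_chain_max[OF ch, of "diag_diff X" 0] by simp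
  also have "\<dots> = S_op n X k k"
    unfolding S_op_def using S_aux_diagonal k by simp
  also have "\<dots> \<le> int k"
    using GX k unfolding GOGAm_triangle_def Magog_triangle_def by blast
  finally show "S_op n Y k k \<le> int k" .
qed

section \<open>Capping diagonals\<close>

lemma GOGAm_cap_diagonals:
  assumes GX: "GOGAm_triangle n X" and GY: "GT_triangle n Y"
    and cap: "\<And>i. (\<forall>c. 1 \<le> c \<longrightarrow> c + i \<le> n \<longrightarrow> Y (c+i) c = X (c+i) c)
                 \<or> (\<exists>t. \<forall>c. 1 \<le> c \<longrightarrow> c + i \<le> n \<longrightarrow> Y (c+i) c = min (X (c+i) c) t)"
  shows "GOGAm_triangle n Y"
proof (rule GOGAm_transfer[OF GX GY])
  have G: "GT_triangle n X" using GX unfolding GOGAm_triangle_def by blast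
  fix i c c' :: nat assume c: "1 \<le> c'" "c' < c" "c + i \<le> n"
  then have "X (c'+i) c' \<le> X (c+i) c" using GT_triangle_diag_mono[OF G, of c' c i] by simp
  then show "Y (c+i) c - Y (c'+i) c' \<le> X (c+i) c - X (c'+i) c'"
    using cap[of i] c by (fastforce simp: min_def)
next
  fix i c :: nat assume "1 \<le> c" "c + i \<le> n"
  then show "Y (c+i) c \<le> X (c+i) c" using cap[of i] by fastforce
qed

lemma GOGAm_truncate:
  assumes GX: "GOGAm_triangle n X"
  shows "GOGAm_triangle n (\<lambda>i j. if 1 \<le> j \<and> j + k \<le> i \<and> i \<le> n then 1 else X i j)"
    (is "GOGAm_triangle n ?Y")
proof (rule GOGAm_cap_diagonals[OF GX])
  have G: "GT_triangle n X" using GX unfolding GOGAm_triangle_def by blast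
  show "GT_triangle n ?Y"
    unfolding GT_triangle_def
  proof (rule conjI; intro allI impI)
    fix i j assume "in_tri n i j"
    then show "1 \<le> ?Y i j" using GT_triangle_pos[OF G] by simp
  next
    fix i j assume h: "1 \<le> j \<and> j \<le> i \<and> i + 1 \<le> n"
    then have "1 \<le> X i j" using GT_triangle_pos[OF G, of i j] by (simp add: in_tri_def)
    with h show "?Y (i+1) j \<le> ?Y i j \<and> ?Y i j \<le> ?Y (i+1) (j+1)"
      using GT_triangle_interlace[OF G, of j i] by auto
  qed
  fix i
  show "(\<forall>c. 1 \<le> c \<longrightarrow> c + i \<le> n \<longrightarrow> ?Y (c+i) c = X (c+i) c)
      \<or> (\<exists>t. \<forall>c. 1 \<le> c \<longrightarrow> c + i \<le> n \<longrightarrow> ?Y (c+i) c = min (X (c+i) c) t)"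
  proof (cases "k \<le> i")
    case True
    have "?Y (c+i) c = min (X (c+i) c) 1" if "1 \<le> c" "c + i \<le> n" for c
      using that True GT_triangle_pos[OF G, of "c+i" c] by (simp add: in_tri_def)
    then show ?thesis by blast
  qed simp
qed

lemma GT_flatten_diagonal:
  assumes G: "GT_triangle n X" and mk: "m \<le> n" "k \<le> m" "1 \<le> k"
    and const: "\<And>l. m + 1 + l \<le> n \<Longrightarrow> X (m+1+l) (k+l) = X (m+1) k"
  shows "GT_triangle n (\<lambda>a b. if m < a \<and> a \<le> n \<and> a + k = b + m then X m k else X a b)"
    (is "GT_triangle n ?Y")
  unfolding GT_triangle_def
proof (rule conjI; intro allI impI)
  fix i j assume "in_tri n i j"
  then show "1 \<le> ?Y i j"
    using GT_triangle_pos[OF G, of i j] GT_triangle_pos[OF G, of m k] mk by (simp add: in_tri_def)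
next
  fix i j assume h: "1 \<le> j \<and> j \<le> i \<and> i + 1 \<le> n"
  have X: "X (i+1) j \<le> X i j" "X i j \<le> X (i+1) (j+1)" using GT_triangle_interlace[OF G] h by auto
  consider "i + k = j + m" "m \<le> i" | "i + k = j + m" "i < m" | "i + 1 + k = j + m" "m \<le> i"
    | "i + k \<noteq> j + m" "i + 1 + k = j + m \<longrightarrow> i < m" by linarith
  then show "?Y (i+1) j \<le> ?Y i j \<and> ?Y i j \<le> ?Y (i+1) (j+1)"
  proof cases
    case 1
    then have "m + 1 + (i - m) = i + 1" "k + (i - m) = j" by auto
    then have "X (i+1) j = X (m+1) k" using const[of "i - m"] h by simp
    moreover have "X (m+1) k \<le> X m k" using GT_triangle_interlace[OF G, of k m] 1 h mk by simp
    ultimately show ?thesis using 1 h by auto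
  next
    case 3
    then have "j + (m - k) = i + 1" "k \<le> j" using mk by linarith+
    then have "X m k \<le> X (i+1) j"
      using GT_triangle_diag_mono[OF G, of k j "m - k"] h mk by simp
    then show ?thesis using 3 X h by auto
  qed (use X h in auto)
qed

lemma GOGAm_flatten_diagonal:
  assumes GX: "GOGAm_triangle n X" and mk: "m \<le> n" "k \<le> m" "1 \<le> k"
    and const: "\<And>l. m + 1 + l \<le> n \<Longrightarrow> X (m+1+l) (k+l) = X (m+1) k"
  shows "GOGAm_triangle n (\<lambda>a b. if m < a \<and> a \<le> n \<and> a + k = b + m then X m k else X a b)"
    (is "GOGAm_triangle n ?Y")
proof (rule GOGAm_cap_diagonals[OF GX])
  have G: "GT_triangle n X" using GX unfolding GOGAm_triangle_def by blast
  show "GT_triangle n ?Y" by (rule GT_flatten_diagonal[OF G mk const])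
  fix i
  show "(\<forall>c. 1 \<le> c \<longrightarrow> c + i \<le> n \<longrightarrow> ?Y (c+i) c = X (c+i) c)
      \<or> (\<exists>t. \<forall>c. 1 \<le> c \<longrightarrow> c + i \<le> n \<longrightarrow> ?Y (c+i) c = min (X (c+i) c) t)"
  proof (cases "i + k = m")
    case True
    txt \<open>Along this diagonal X is at most X m k up to (m, k) and at least X m k beyond it.\<close>
    have "?Y (c+i) c = min (X (c+i) c) (X m k)" if "1 \<le> c" "c + i \<le> n" for c
      using that True GT_triangle_diag_mono[OF G, of c k i] GT_triangle_diag_mono[OF G, of k c i] mk
      by (cases "k < c") (auto simp: add.commute min_def)
    then show ?thesis by blast
  qed auto
qed

lemma shifted_diagonal_iff:
  fixes k m n a b :: nat
  assumes "k \<le> m" "m \<le> n"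
  shows "(\<exists>l. 1 \<le> l \<and> l \<le> n - m \<and> a = m + l \<and> b = k + l) \<longleftrightarrow> (m < a \<and> a \<le> n \<and> a + k = b + m)"
proof
  assume "m < a \<and> a \<le> n \<and> a + k = b + m"
  then show "\<exists>l. 1 \<le> l \<and> l \<le> n - m \<and> a = m + l \<and> b = k + l"
    using assms by (intro exI[of _ "a - m"]) auto
qed (use assms in auto)

theorem mainTheorem8:
  fixes n :: nat and X :: "nat \<Rightarrow> nat \<Rightarrow> int"
  assumes "GOGAm_triangle n X"
  shows "(\<forall>k. 1 \<le> k \<and> k \<le> n \<longrightarrow>
            GOGAm_triangle n (\<lambda>i j. if 1 \<le> j \<and> j + k \<le> i \<and> i \<le> n then 1 else X i j))
       \<and> (\<forall>m k. n \<ge> m \<and> m \<ge> k \<and> k \<ge> 1 \<and>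
            (\<forall>i l. m + 1 \<le> i \<and> i \<le> n \<and> l \<le> n - i \<longrightarrow> X (i+l) (k+l) = X i k) \<longrightarrow>
            GOGAm_triangle n (\<lambda>a b. if (\<exists>l. 1 \<le> l \<and> l \<le> n - m \<and> a = m + l \<and> b = k + l)
                                     then X m k else X a b))"
proof (intro conjI allI impI)
  fix k
  show "GOGAm_triangle n (\<lambda>i j. if 1 \<le> j \<and> j + k \<le> i \<and> i \<le> n then 1 else X i j)"
    using GOGAm_truncate[OF assms] .
next
  fix m k
  assume h: "n \<ge> m \<and> m \<ge> k \<and> k \<ge> 1 \<and>
    (\<forall>i l. m + 1 \<le> i \<and> i \<le> n \<and> l \<le> n - i \<longrightarrow> X (i+l) (k+l) = X i k)"
  have "X (m+1+l) (k+l) = X (m+1) k" if "m + 1 + l \<le> n" for l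
    using that h[THEN conjunct2, THEN conjunct2, THEN conjunct2, rule_format, of "m+1" l] by simp
  then have "GOGAm_triangle n (\<lambda>a b. if m < a \<and> a \<le> n \<and> a + k = b + m then X m k else X a b)"
    using GOGAm_flatten_diagonal[OF assms] h by blast
  then show "GOGAm_triangle n (\<lambda>a b. if (\<exists>l. 1 \<le> l \<and> l \<le> n - m \<and> a = m + l \<and> b = k + l)
      then X m k else X a b)"
    using shifted_diagonal_iff[of k m n] h by simp
qed

end
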